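(* Consider the discrete-time LTI system $x^+ = A^\star x + B^\star u$, $y = C^\star x$ with $x\in\mathbb{R}^n$, $u\in\mathbb{R}^m$, $y\in\mathbb{R}^p$, where $(A^\star,C^\star)$ is observable with observability index $\ell^\star$. Let $\mathcal{O}_{\ell^\star} := \begin{bmatrix} C^\star \\ C^\star A^\star \\ \vdots \\ C^\star {A^\star}^{\ell^\star-1}\end{bmatrix}\in\mathbb{R}^{p\ell^\star\times n}$, let $\mathcal{O}_{\ell^\star}^{\mathrm{L}}$ be a left inverse of it ($\mathcal{O}_{\ell^\star}^{\mathrm{L}}\mathcal{O}_{\ell^\star}=I_n$), let $\mathcal{T}_{\ell^\star}\in\mathbb{R}^{p\ell^\star\times m\ell^\star}$ be the block lower-triangular Toeplitz matrix whose $(i,j)$ block ($i,j=1,\dots,\ell^\star$) is $C^\star {A^\star}^{i-j-1}B^\star$ if $i>j$ and $0_{p\times m}$ otherwise, and let $\mathcal{R}_{\ell^\star} := \begin{bmatrix} {A^\star}^{\ell^\star-1}B^\star & \cdots & A^\star B^\star & B^\star\end{bmatrix}$. Define $Z_{1\ell^\star} := C^\star {A^\star}^{\ell^\star}\mathcal{O}_{\ell^\star}^{\mathrm{L}}$, $Z_{2\ell^\star} := C^\star\mathcal{R}_{\ell^\star} - C^\star {A^\star}^{\ell^\star}\mathcal{O}_{\ell^\star}^{\mathrm{L}}\mathcal{T}_{\ell^\star}$, $Z_{\ell^\star} := \begin{bmatrix} Z_{1\ell^\star} & Z_{2\ell^\star}\end{bmatrix}$. Let $\mathbf{F}_{\ell^\star}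 := \mathrm{blockdiag}(S_p, S_m)$, where $S_p\in\mathbb{R}^{p\ell^\star\times p\ell^\star}$ (resp. $S_m\in\mathbb{R}^{m\ell^\star\times m\ell^\star}$) is the block shift matrix with identity blocks $I_p$ (resp. $I_m$) on the first block superdiagonal and zeros elsewhere; let $\mathbf{L}_{\ell^\star}\in\mathbb{R}^{(p+m)\ell^\star\times p}$ have $I_p$ in its $\ell^\star$-th block row of size $p$ and zeros elsewhere, and let $\mathbf{B}_{\ell^\star}\in\mathbb{R}^{(p+m)\ell^\star\times m}$ have $I_m$ as its last block row (of size $m$) and zeros elsewhere. Set $\mathbf{A}_{\ell^\star} := \mathbf{F}_{\ell^\star} + \mathbf{L}_{\ell^\star} Z_{\ell^\star}$ and $\mathbf{B}^{\mathrm{d}}_{\ell^\star} := \mathbf{L}_{\ell^\star}\begin{bmatrix} I_p & -Z_{1\ell^\star} & -Z_{2\ell^\star}\end{bmatrix}$. Data are collected for $k=0,\dots,T$: the measured input is $u^{\mathrm{m}}(k) = u(k) + d^u(k)$ and the measured output is $y^{\mathrm{m}}(k) = y(k) + d^y(k)$, where $u(k)$ is the actual input, $y(k)=C^\star x(k)$ the actual output, and $d^u,d^y$ unknown noise. Define $\Psi_1 := \begin{bmatrix} y^{\mathrm{m}}(1) & \cdots & y^{\mathrm{m}}(T-\ell^\star+1)\\ \vdots & & \vdots\\ y^{\mathrm{m}}(\ell^\star) & \cdots & y^{\mathrm{m}}(T)\\ u^{\mathrm{m}}(1) & \cdots & u^{\mathrm{m}}(T-\ell^\star+1)\\ \vdots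 & & \vdots\\ u^{\mathrm{m}}(\ell^\star) & \cdots & u^{\mathrm{m}}(T)\end{bmatrix}$, $\Psi_0 := \begin{bmatrix} y^{\mathrm{m}}(0) & \cdots & y^{\mathrm{m}}(T-\ell^\star)\\ \vdots & & \vdots\\ y^{\mathrm{m}}(\ell^\star-1) & \cdots & y^{\mathrm{m}}(T-1)\\ u^{\mathrm{m}}(0) & \cdots & u^{\mathrm{m}}(T-\ell^\star)\\ \vdots & & \vdots\\ u^{\mathrm{m}}(\ell^\star-1) & \cdots & u^{\mathrm{m}}(T-1)\end{bmatrix}$, $U_1 := \begin{bmatrix} u^{\mathrm{m}}(\ell^\star) & \cdots & u^{\mathrm{m}}(T)\end{bmatrix}$, $\Delta_{10} := \begin{bmatrix} d^y(\ell^\star) & \cdots & d^y(T)\\ d^y(0) & \cdots & d^y(T-\ell^\star)\\ \vdots & & \vdots\\ d^y(\ell^\star-1) & \cdots & d^y(T-1)\\ d^u(0) & \cdots & d^u(T-\ell^\star)\\ \vdots & & \vdots\\ d^u(\ell^\star-1) & \cdots & d^u(T-1)\end{bmatrix}$. Then the data satisfy, for $k=\ell^\star,\dots,T$, $y^{\mathrm{m}}(k) = Z_{1\ell^\star}\begin{bmatrix} y^{\mathrm{m}}(k-\ell^\star)\\ \vdots\\ y^{\mathrm{m}}(k-1)\end{bmatrix} + Z_{2\ell^\star}\begin{bmatrix} u^{\mathrm{m}}(k-\ell^\star)\\ \vdots\\ u^{\mathrm{m}}(k-1)\end{bmatrix} - Z_{1\ell^\star}\begin{bmatrix} d^y(k-\ell^\star)\\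 \vdots\\ d^y(k-1)\end{bmatrix} - Z_{2\ell^\star}\begin{bmatrix} d^u(k-\ell^\star)\\ \vdots\\ d^u(k-1)\end{bmatrix} + d^y(k)$, and $\begin{bmatrix} y^{\mathrm{m}}(k-\ell^\star+1)\\ \vdots\\ y^{\mathrm{m}}(k)\\ u^{\mathrm{m}}(k-\ell^\star+1)\\ \vdots\\ u^{\mathrm{m}}(k)\end{bmatrix} = (\mathbf{F}_{\ell^\star} + \mathbf{L}_{\ell^\star}[Z_{1\ell^\star}\ Z_{2\ell^\star}])\begin{bmatrix} y^{\mathrm{m}}(k-\ell^\star)\\ \vdots\\ y^{\mathrm{m}}(k-1)\\ u^{\mathrm{m}}(k-\ell^\star)\\ \vdots\\ u^{\mathrm{m}}(k-1)\end{bmatrix} + \mathbf{B}_{\ell^\star} u^{\mathrm{m}}(k) + \mathbf{L}_{\ell^\star}[I_p\ -Z_{1\ell^\star}\ -Z_{2\ell^\star}]\begin{bmatrix} d^y(k)\\ d^y(k-\ell^\star)\\ \vdots\\ d^y(k-1)\\ d^u(k-\ell^\star)\\ \vdots\\ d^u(k-1)\end{bmatrix}$, and, in matrix form, $\Psi_1 = (\mathbf{F}_{\ell^\star} + \mathbf{L}_{\ell^\star} Z_{\ell^\star})\Psi_0 + \mathbf{B}_{\ell^\star} U_1 + \mathbf{L}_{\ell^\star}[I_p\ -Z_{\ell^\star}]\Delta_{10} = \mathbf{A}_{\ell^\star}\Psi_0 + \mathbf{B}_{\ell^\star} U_1 + \mathbf{B}^{\mathrm{d}}_{\ell^\star}\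Delta_{10}$.
   Context: Unknown system $(A^\star,B^\star,C^\star)$; only the observability index $\ell^\star$ is known. Noisy input-output data $\{u^{\mathrm{m}}(k),y^{\mathrm{m}}(k)\}_{k=0}^T$ are collected from an experiment on the system with additive input noise $d^u$ and output noise $d^y$. All definitions needed are given in the claim. *)

theory Defs
  imports "Jordan_Normal_Form.DL_Rank"
begin

text \<open>Block indices are 0-based internally: block row i (0-based) of a stacked matrix
 with blocks of height q occupies rows q*i .. q*i+q-1.\<close>

definition hcat :: "real mat \<Rightarrow> real mat \<Rightarrow> real mat" where
  "hcat X Y = mat (dim_row X) (dim_col X + dim_col Y)
     (\<lambda>(i,j). if j < dim_col X then X $$ (i,j) else Y $$ (i, j - dim_col X))"

definition vcat :: "real mat \<Rightarrow> real mat \<Rightarrow> real mat" where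
  "vcat X Y = mat (dim_row X + dim_row Y) (dim_col X)
     (\<lambda>(i,j). if i < dim_row X then X $$ (i,j) else Y $$ (i - dim_row X, j))"

definition blockdiag :: "real mat \<Rightarrow> real mat \<Rightarrow> real mat" where
  "blockdiag X Y = four_block_mat X (0\<^sub>m (dim_row X) (dim_col Y)) (0\<^sub>m (dim_row Y) (dim_col X)) Y"

definition obsv_mat :: "real mat \<Rightarrow> real mat \<Rightarrow> nat \<Rightarrow> real mat" where
  "obsv_mat C A l = mat (dim_row C * l) (dim_col A)
     (\<lambda>(i,j). (C * A ^\<^sub>m (i div dim_row C)) $$ (i mod dim_row C, j))"

definition observable :: "real mat \<Rightarrow> real mat \<Rightarrow> bool" where
  "observable C A \<longleftrightarrow>
     vec_space.rank (dim_row C * dim_col A) (obsv_mat C A (dim_col A)) = dim_col A"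

definition obs_index :: "real mat \<Rightarrow> real mat \<Rightarrow> nat" where
  "obs_index C A = (LEAST l. vec_space.rank (dim_row C * l) (obsv_mat C A l) = dim_col A)"

definition toeplitz_mat :: "real mat \<Rightarrow> real mat \<Rightarrow> real mat \<Rightarrow> nat \<Rightarrow> real mat" where
  "toeplitz_mat C A B l = mat (dim_row C * l) (dim_col B * l)
     (\<lambda>(i,j). if i div dim_row C > j div dim_col B
              then (C * A ^\<^sub>m (i div dim_row C - j div dim_col B - 1) * B)
                     $$ (i mod dim_row C, j mod dim_col B)
              else 0)"

definition reach_mat :: "real mat \<Rightarrow> real mat \<Rightarrow> nat \<Rightarrow> real mat" where
  "reach_mat A B l = mat (dim_row A) (dim_col B * l)
     (\<lambda>(i,j). (A ^\<^sub>m (l - 1 - j div dim_col B) * B) $$ (i, j mod dim_col B))"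

definition shift_mat :: "nat \<Rightarrow> nat \<Rightarrow> real mat" where
  "shift_mat q l = mat (q * l) (q * l) (\<lambda>(i,j). if j = i + q then 1 else 0)"

definition L_mat :: "nat \<Rightarrow> nat \<Rightarrow> nat \<Rightarrow> real mat" where
  "L_mat p m l = mat ((p + m) * l) p (\<lambda>(i,j). if i = (l - 1) * p + j then 1 else 0)"

definition Bl_mat :: "nat \<Rightarrow> nat \<Rightarrow> nat \<Rightarrow> real mat" where
  "Bl_mat p m l = mat ((p + m) * l) m (\<lambda>(i,j). if i = (p + m) * l - m + j then 1 else 0)"

definition window :: "(nat \<Rightarrow> real vec) \<Rightarrow> nat \<Rightarrow> nat \<Rightarrow> nat \<Rightarrow> real vec" where
  "window f q k l = vec (q * l) (\<lambda>i. f (k - l + i div q) $ (i mod q))"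

definition hankel :: "(nat \<Rightarrow> real vec) \<Rightarrow> nat \<Rightarrow> nat \<Rightarrow> nat \<Rightarrow> nat \<Rightarrow> real mat" where
  "hankel f q s l N = mat (q * l) N (\<lambda>(i,j). f (s + j + i div q) $ (i mod q))"

definition Z1_mat :: "real mat \<Rightarrow> real mat \<Rightarrow> real mat \<Rightarrow> nat \<Rightarrow> real mat" where
  "Z1_mat C A OL l = C * A ^\<^sub>m l * OL"

definition Z2_mat :: "real mat \<Rightarrow> real mat \<Rightarrow> real mat \<Rightarrow> real mat \<Rightarrow> nat \<Rightarrow> real mat" where
  "Z2_mat C A B OL l = C * reach_mat A B l - C * A ^\<^sub>m l * OL * toeplitz_mat C A B l"

definition Z_mat :: "real mat \<Rightarrow> real mat \<Rightarrow> real mat \<Rightarrow> real mat \<Rightarrow> nat \<Rightarrow> real mat" where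
  "Z_mat C A B OL l = hcat (Z1_mat C A OL l) (Z2_mat C A B OL l)"

end

(*
  Over a window of length l the state satisfies x(k) = A^l x(k-l) + R_l u[k-l,k) and the stacked
  outputs satisfy y[k-l,k) = O_l x(k-l) + T_l u[k-l,k).  The left inverse of O_l recovers x(k-l)
  from the second identity; inserted into the first it gives C x(k) = Z1 y[k-l,k) + Z2 u[k-l,k).
  Writing the true signals as measured signals minus noise turns this into the noisy predictor.
  The stacked window [y; u] is a shift register, updated by F v + L y(k) + B u(k); substituting
  the predictor for y(k) gives the companion-form recursion, whose instances k = l, ..., T are
  the columns of the Hankel-matrix identity.
*)
theory Submission
  imports Defs
begin

section \<open>Block matrices\<close>

lemma dim_hcat [simp]:
  "dim_row (hcat X Y) = dim_row X" "dim_col (hcat X Y) = dim_col X + dim_col Y"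
  unfolding hcat_def by auto

lemma hcat_carrier_mat [simp]:
  "X \<in> carrier_mat r a \<Longrightarrow> Y \<in> carrier_mat r b \<Longrightarrow> hcat X Y \<in> carrier_mat r (a + b)"
  unfolding hcat_def by auto

lemma row_hcat:
  "X \<in> carrier_mat r a \<Longrightarrow> Y \<in> carrier_mat r b \<Longrightarrow> i < r \<Longrightarrow> row (hcat X Y) i = row X i @\<^sub>v row Y i"
  unfolding hcat_def by (intro eq_vecI) auto

lemma col_hcat:
  "j < dim_col (hcat X Y) \<Longrightarrow> dim_row Y = dim_row X \<Longrightarrow>
   col (hcat X Y) j = (if j < dim_col X then col X j else col Y (j - dim_col X))"
  unfolding hcat_def by (intro eq_vecI) auto

lemma hcat_mult_vec:
  assumes X: "X \<in> carrier_mat r a" and Y: "Y \<in> carrier_mat r b"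
    and v: "v \<in> carrier_vec a" and w: "w \<in> carrier_vec b"
  shows "hcat X Y *\<^sub>v (v @\<^sub>v w) = X *\<^sub>v v + Y *\<^sub>v w"
proof (rule eq_vecI)
  fix i assume "i < dim_vec (X *\<^sub>v v + Y *\<^sub>v w)"
  then have i: "i < r" using Y by auto
  then have "(hcat X Y *\<^sub>v (v @\<^sub>v w)) $ i = (row X i @\<^sub>v row Y i) \<bullet> (v @\<^sub>v w)"
    using X Y by (simp add: row_hcat)
  also have "\<dots> = row X i \<bullet> v + row Y i \<bullet> w"
    using X Y v w i by (intro scalar_prod_append) auto
  finally show "(hcat X Y *\<^sub>v (v @\<^sub>v w)) $ i = (X *\<^sub>v v + Y *\<^sub>v w) $ i"
    using i X Y by simp
qed (use X Y in auto)

lemma uminus_hcat: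
  "X \<in> carrier_mat r a \<Longrightarrow> Y \<in> carrier_mat r b \<Longrightarrow> - hcat X Y = hcat (- X) (- Y)"
  unfolding hcat_def by (intro eq_matI) auto

lemma hcat_assoc:
  "X \<in> carrier_mat r a \<Longrightarrow> Y \<in> carrier_mat r b \<Longrightarrow> W \<in> carrier_mat r c \<Longrightarrow>
   hcat X (hcat Y W) = hcat (hcat X Y) W"
  unfolding hcat_def by (intro eq_matI) auto

lemma hcat_one_uminus_mult_vec:
  assumes Z1: "Z1 \<in> carrier_mat p a" and Z2: "Z2 \<in> carrier_mat p b"
    and e: "e \<in> carrier_vec p" and v: "v \<in> carrier_vec a" and w: "w \<in> carrier_vec b"
  shows "hcat (hcat (1\<^sub>m p) (- Z1)) (- Z2) *\<^sub>v (e @\<^sub>v v @\<^sub>v w) = e + (- Z1 *\<^sub>v v + - Z2 *\<^sub>v w)"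
proof -
  have mZ: "- Z1 \<in> carrier_mat p a" "- Z2 \<in> carrier_mat p b" using Z1 Z2 by simp_all
  have "hcat (hcat (1\<^sub>m p) (- Z1)) (- Z2) = hcat (1\<^sub>m p) (hcat (- Z1) (- Z2))"
    by (rule hcat_assoc[symmetric, OF one_carrier_mat mZ])
  also have "\<dots> *\<^sub>v (e @\<^sub>v v @\<^sub>v w) = 1\<^sub>m p *\<^sub>v e + hcat (- Z1) (- Z2) *\<^sub>v (v @\<^sub>v w)"
    by (rule hcat_mult_vec[OF one_carrier_mat hcat_carrier_mat[OF mZ] e]) (simp add: v w)
  finally show ?thesis using mZ e v w by (simp add: hcat_mult_vec)
qed

lemma vcat_dim [simp]: "dim_row (vcat X Y) = dim_row X + dim_row Y" "dim_col (vcat X Y) = dim_col X"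
  unfolding vcat_def by simp_all

lemma col_vcat:
  "j < dim_col X \<Longrightarrow> dim_col Y = dim_col X \<Longrightarrow> col (vcat X Y) j = col X j @\<^sub>v col Y j"
  unfolding vcat_def by (intro eq_vecI) auto

lemma mat_eq_mult_add_by_col:
  assumes X: "X \<in> carrier_mat r a" and P: "P \<in> carrier_mat a N"
    and Y: "Y \<in> carrier_mat r b" and Q: "Q \<in> carrier_mat b N"
    and W: "W \<in> carrier_mat r c" and R: "R \<in> carrier_mat c N"
    and M: "M \<in> carrier_mat r N"
    and cols: "\<And>j. j < N \<Longrightarrow> col M j = X *\<^sub>v col P j + Y *\<^sub>v col Q j + W *\<^sub>v col R j"
  shows "M = X * P + Y * Q + W * R"
proof (rule mat_col_eqI)
  fix j assume "j < dim_col (X * P + Y * Q + W * R)"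
  then have j: "j < N" using R by simp
  have "col (X * P + Y * Q + W * R) j = col (X * P) j + col (Y * Q) j + col (W * R) j"
    by (simp only: col_add[OF add_carrier_mat[OF mult_carrier_mat[OF Y Q]] mult_carrier_mat[OF W R] j]
        col_add[OF mult_carrier_mat[OF X P] mult_carrier_mat[OF Y Q] j])
  also have "\<dots> = X *\<^sub>v col P j + Y *\<^sub>v col Q j + W *\<^sub>v col R j"
    by (simp only: col_mult2[OF X P j] col_mult2[OF Y Q j] col_mult2[OF W R j])
  finally show "col M j = col (X * P + Y * Q + W * R) j" by (simp only: cols[OF j])
qed (use W R M in auto)

section \<open>Windows and the shift register\<close>

lemma window_carrier [simp]:
  "dim_vec (window f q k l) = q * l" "window f q k l \<in> carrier_vec (q * l)"
  unfolding window_def by simp_all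

lemma block_div_mod:
  assumes "q * b \<le> (i::nat)" "i < q * b + q"
  shows "i div q = b" "i mod q = i - q * b"
proof -
  show "i div q = b" using assms by (intro div_nat_eqI) auto
  then show "i mod q = i - q * b" by (metis minus_div_mult_eq_mod mult.commute)
qed

lemma block_div_less: "i < q * l \<Longrightarrow> (i::nat) div q < l"
  by (simp add: less_mult_imp_div_less mult.commute)

lemma window_cong:
  assumes "l \<le> k" and "\<And>t. k - l \<le> t \<Longrightarrow> t < k \<Longrightarrow> f t = g t"
  shows "window f q k l = window g q k l"
proof (rule eq_vecI)
  fix i assume "i < dim_vec (window g q k l)"
  then have "i < q * l" "i div q < l" by (simp_all add: block_div_less)
  moreover have "f (k - l + i div q) = g (k - l + i div q)"
    using assms \<open>i div q < l\<close> by simp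
  ultimately show "window f q k l $ i = window g q k l $ i" unfolding window_def by simp
qed simp

lemma window_add:
  assumes "\<And>t. f t \<in> carrier_vec q" and "\<And>t. g t \<in> carrier_vec q"
  shows "window (\<lambda>t. f t + g t) q k l = window f q k l + window g q k l"
proof (rule eq_vecI)
  fix i assume "i < dim_vec (window f q k l + window g q k l)"
  then have "i < q * l" by simp
  moreover have "i mod q < q" using \<open>i < q * l\<close> by (cases q) auto
  moreover have "dim_vec (g t) = q" for t using assms(2) by simp
  ultimately show "window (\<lambda>t. f t + g t) q k l $ i = (window f q k l + window g q k l) $ i"
    unfolding window_def by simp
qed simp

lemma window_snoc:
  assumes "l \<le> k" and "f k \<in> carrier_vec q"
  shows "window f q (Suc k) (Suc l) = window f q k l @\<^sub>v f k"
proof (rule eq_vecI)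
  fix i assume "i < dim_vec (window f q k l @\<^sub>v f k)"
  then have i: "i < q * l + q" using assms(2) by simp
  show "window f q (Suc k) (Suc l) $ i = (window f q k l @\<^sub>v f k) $ i"
  proof (cases "i < q * l")
    case False
    then show ?thesis using i assms block_div_mod[of q l i] unfolding window_def by simp
  qed (use i assms in \<open>simp add: window_def\<close>)
qed (use assms in simp)

lemma window_one: "f k \<in> carrier_vec q \<Longrightarrow> window f q (Suc k) 1 = f k"
  unfolding window_def by (intro eq_vecI) auto

lemma window_split:
  assumes "b \<le> l" and "l \<le> k"
  shows "window f q k l = window f q (k - l + b) b @\<^sub>v window f q k (l - b)"
proof (rule eq_vecI)
  fix i assume "i < dim_vec (window f q (k - l + b) b @\<^sub>v window f q k (l - b))"
  then have i: "i < q * b + q * (l - b)" by simp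
  show "window f q k l $ i = (window f q (k - l + b) b @\<^sub>v window f q k (l - b)) $ i"
  proof (cases "i < q * b")
    case False
    then obtain j where j: "i = q * b + j" by (metis le_add_diff_inverse not_less)
    then have q: "q > 0" using i by (cases q) auto
    have "i div q = b + j div q" "i mod q = j mod q" using j q by simp_all
    moreover have "k - l + (b + j div q) = k - (l - b) + j div q" using assms by simp
    moreover have "i < q * l" "j < q * (l - b)" using i j assms(1) by (simp_all add: diff_mult_distrib2)
    ultimately show ?thesis using False j unfolding window_def by (simp only: index_vec index_append_vec) simp
  next
    case True
    moreover have "i < q * l" using True assms(1) by (meson less_le_trans mult_le_mono2)
    ultimately show ?thesis by (simp add: window_def)
  qed
qed (use assms(1) in \<open>simp add: diff_mult_distrib2\<close>)

definition last_block :: "nat \<Rightarrow> nat \<Rightarrow> real vec \<Rightarrow> real vec" where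
  "last_block q l v = vec (q * l) (\<lambda>i. if (l - 1) * q \<le> i then v $ (i - (l - 1) * q) else 0)"

lemma last_block_carrier [simp]:
  "dim_vec (last_block q l v) = q * l" "last_block q l v \<in> carrier_vec (q * l)"
  unfolding last_block_def by simp_all

lemma shift_mat_carrier [simp]:
  "dim_row (shift_mat q l) = q * l" "dim_col (shift_mat q l) = q * l"
  "shift_mat q l \<in> carrier_mat (q * l) (q * l)"
  unfolding shift_mat_def by simp_all

lemma L_mat_carrier [simp]:
  "dim_row (L_mat p m l) = (p + m) * l" "dim_col (L_mat p m l) = p"
  "L_mat p m l \<in> carrier_mat ((p + m) * l) p"
  unfolding L_mat_def by simp_all

lemma Bl_mat_carrier [simp]:
  "dim_row (Bl_mat p m l) = (p + m) * l" "dim_col (Bl_mat p m l) = m"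
  "Bl_mat p m l \<in> carrier_mat ((p + m) * l) m"
  unfolding Bl_mat_def by simp_all

lemma shift_mat_mult_vec:
  assumes "v \<in> carrier_vec (q * l)"
  shows "shift_mat q l *\<^sub>v v = vec (q * l) (\<lambda>i. if i + q < q * l then v $ (i + q) else 0)"
proof (rule eq_vecI)
  fix i assume "i < dim_vec (vec (q * l) (\<lambda>i. if i + q < q * l then v $ (i + q) else 0))"
  then have i: "i < q * l" by simp
  have "(shift_mat q l *\<^sub>v v) $ i = (\<Sum>j\<in>{0..<q * l}. (if j = i + q then 1 else 0) * v $ j)"
    using assms i unfolding shift_mat_def by (simp add: scalar_prod_def)
  also have "\<dots> = (\<Sum>j\<in>{0..<q * l}. if j = i + q then v $ j else 0)"
    by (intro sum.cong) auto
  finally have "(shift_mat q l *\<^sub>v v) $ i = (\<Sum>j\<in>{0..<q * l}. if j = i + q then v $ j else 0)" .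
  then show "(shift_mat q l *\<^sub>v v) $ i = vec (q * l) (\<lambda>i. if i + q < q * l then v $ (i + q) else 0) $ i"
    using i by (simp add: sum.delta)
qed simp

lemma window_Suc:
  assumes "l \<le> k" and "f k \<in> carrier_vec q"
  shows "window f q (Suc k) l = shift_mat q l *\<^sub>v window f q k l + last_block q l (f k)"
proof (rule eq_vecI)
  fix i assume "i < dim_vec (shift_mat q l *\<^sub>v window f q k l + last_block q l (f k))"
  then have i: "i < q * l" by simp
  then have q: "q > 0" and l: "l > 0" by (cases q; cases l; auto)+
  have ql: "q * l = q * (l - 1) + q" using l by (cases l) auto
  obtain d where k: "k = l + d" using assms(1) by (metis le_add_diff_inverse)
  show "window f q (Suc k) l $ i = (shift_mat q l *\<^sub>v window f q k l + last_block q l (f k)) $ i"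
  proof (cases "i + q < q * l")
    case True
    have "(i + q) div q = Suc (i div q)" "(i + q) mod q = i mod q" using q by simp_all
    moreover have "\<not> (l - 1) * q \<le> i" using True ql by (simp add: mult.commute)
    ultimately show ?thesis using True i k by (simp add: shift_mat_mult_vec window_def last_block_def)
  next
    case False
    then have "i div q = l - 1" "i mod q = i - q * (l - 1)"
      using i ql block_div_mod[of q "l - 1" i] by auto
    moreover have "Suc k - l + (l - 1) = k" using k l by simp
    moreover have "(l - 1) * q \<le> i" using False ql by (simp add: mult.commute)
    ultimately show ?thesis using False i assms(2)
      by (simp add: shift_mat_mult_vec window_def last_block_def mult.commute)
  qed
qed simp

lemma L_mat_mult_vec:
  assumes "a \<in> carrier_vec p"
  shows "L_mat p m l *\<^sub>v a = last_block p l a @\<^sub>v 0\<^sub>v (m * l)"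
proof (rule eq_vecI)
  fix i assume "i < dim_vec (last_block p l a @\<^sub>v 0\<^sub>v (m * l))"
  then have i: "i < (p + m) * l" by (simp add: algebra_simps)
  have "(L_mat p m l *\<^sub>v a) $ i = (\<Sum>j\<in>{0..<p}. if j = i - (l - 1) * p \<and> (l - 1) * p \<le> i then a $ j else 0)"
    using assms i unfolding L_mat_def by (auto simp: scalar_prod_def intro!: sum.cong)
  also have "\<dots> = (if (l - 1) * p \<le> i \<and> i < (l - 1) * p + p then a $ (i - (l - 1) * p) else 0)"
    by (cases "(l - 1) * p \<le> i") (auto simp: sum.delta)
  also have "\<dots> = (last_block p l a @\<^sub>v 0\<^sub>v (m * l)) $ i"
  proof (cases "l = 0")
    case False
    then have "p * l = (l - 1) * p + p" by (cases l) auto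
    then show ?thesis using i by (auto simp: last_block_def algebra_simps)
  qed (use i in simp)
  finally show "(L_mat p m l *\<^sub>v a) $ i = (last_block p l a @\<^sub>v 0\<^sub>v (m * l)) $ i" .
qed (simp add: algebra_simps)

lemma Bl_mat_mult_vec:
  assumes "u \<in> carrier_vec m"
  shows "Bl_mat p m l *\<^sub>v u = 0\<^sub>v (p * l) @\<^sub>v last_block m l u"
proof (rule eq_vecI)
  fix i assume "i < dim_vec (0\<^sub>v (p * l) @\<^sub>v last_block m l u)"
  then have i: "i < (p + m) * l" by (simp add: algebra_simps)
  then have l: "l > 0" by (cases l) auto
  have pml: "(p + m) * l - m = p * l + (l - 1) * m" using l by (cases l) (auto simp: algebra_simps)
  have "(Bl_mat p m l *\<^sub>v u) $ i
      = (\<Sum>j\<in>{0..<m}. if j = i - ((p + m) * l - m) \<and> (p + m) * l - m \<le> i then u $ j else 0)"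
    using assms i unfolding Bl_mat_def by (auto simp: scalar_prod_def intro!: sum.cong)
  also have "\<dots> = (if (p + m) * l - m \<le> i then u $ (i - ((p + m) * l - m)) else 0)"
    using i by (cases "(p + m) * l - m \<le> i") (auto simp: sum.delta)
  also have "\<dots> = (0\<^sub>v (p * l) @\<^sub>v last_block m l u) $ i"
    using i unfolding pml by (auto simp: last_block_def algebra_simps)
  finally show "(Bl_mat p m l *\<^sub>v u) $ i = (0\<^sub>v (p * l) @\<^sub>v last_block m l u) $ i" .
qed (simp add: algebra_simps)

lemma blockdiag_shift_carrier [simp]:
  "blockdiag (shift_mat p l) (shift_mat m l) \<in> carrier_mat ((p + m) * l) ((p + m) * l)"
  unfolding blockdiag_def distrib_right by (simp add: four_block_carrier_mat)

lemma blockdiag_shift_mult_vec: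
  assumes "y \<in> carrier_vec (p * l)" and "w \<in> carrier_vec (m * l)"
  shows "blockdiag (shift_mat p l) (shift_mat m l) *\<^sub>v (y @\<^sub>v w)
       = (shift_mat p l *\<^sub>v y) @\<^sub>v (shift_mat m l *\<^sub>v w)"
  unfolding blockdiag_def using assms by (simp add: mult_mat_vec_split)

lemma stacked_window_Suc:
  assumes "l \<le> k" and "y k \<in> carrier_vec p" and "u k \<in> carrier_vec m"
  shows "window y p (Suc k) l @\<^sub>v window u m (Suc k) l
       = blockdiag (shift_mat p l) (shift_mat m l) *\<^sub>v (window y p k l @\<^sub>v window u m k l)
         + L_mat p m l *\<^sub>v y k + Bl_mat p m l *\<^sub>v u k"
proof -
  let ?Sy = "shift_mat p l *\<^sub>v window y p k l" and ?Su = "shift_mat m l *\<^sub>v window u m k l"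
  have "(?Sy @\<^sub>v ?Su) + (last_block p l (y k) @\<^sub>v 0\<^sub>v (m * l)) + (0\<^sub>v (p * l) @\<^sub>v last_block m l (u k))
      = (?Sy + last_block p l (y k)) @\<^sub>v (?Su + last_block m l (u k))"
    by (intro eq_vecI) auto
  then show ?thesis
    using assms by (simp add: blockdiag_shift_mult_vec L_mat_mult_vec Bl_mat_mult_vec window_Suc)
qed

lemma window_companion_step:
  fixes Z1 Z2 :: "real mat"
  assumes Z1: "Z1 \<in> carrier_mat p (p * l)" and Z2: "Z2 \<in> carrier_mat p (m * l)"
    and "l \<le> k" and ym: "ym k \<in> carrier_vec p" and um: "um k \<in> carrier_vec m"
    and dy: "dy k \<in> carrier_vec p"
    and pred: "ym k = Z1 *\<^sub>v window ym p k l + Z2 *\<^sub>v window um m k l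
                   - Z1 *\<^sub>v window dy p k l - Z2 *\<^sub>v window du m k l + dy k"
  shows "window ym p (Suc k) l @\<^sub>v window um m (Suc k) l
       = (blockdiag (shift_mat p l) (shift_mat m l) + L_mat p m l * hcat Z1 Z2)
           *\<^sub>v (window ym p k l @\<^sub>v window um m k l)
         + Bl_mat p m l *\<^sub>v um k
         + (L_mat p m l * hcat (hcat (1\<^sub>m p) (- Z1)) (- Z2))
           *\<^sub>v (dy k @\<^sub>v window dy p k l @\<^sub>v window du m k l)"
proof -
  define F where "F = blockdiag (shift_mat p l) (shift_mat m l)"
  define L where "L = L_mat p m l"
  define v where "v = window ym p k l @\<^sub>v window um m k l"
  define d where "d = dy k @\<^sub>v window dy p k l @\<^sub>v window du m k l"
  define Z where "Z = hcat Z1 Z2"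
  define W where "W = hcat (hcat (1\<^sub>m p) (- Z1)) (- Z2)"
  have v: "v \<in> carrier_vec ((p + m) * l)" and d: "d \<in> carrier_vec (p + (p + m) * l)"
    unfolding v_def d_def distrib_right using dy by simp_all
  have Z: "Z \<in> carrier_mat p ((p + m) * l)"
    unfolding Z_def distrib_right using Z1 Z2 by simp
  have W: "W \<in> carrier_mat p (p + (p + m) * l)"
    unfolding W_def distrib_right add.assoc[symmetric] using Z1 Z2 by simp
  have "Z *\<^sub>v v = Z1 *\<^sub>v window ym p k l + Z2 *\<^sub>v window um m k l"
    unfolding Z_def v_def using Z1 Z2 by (simp add: hcat_mult_vec)
  moreover have "W *\<^sub>v d = dy k + (- Z1 *\<^sub>v window dy p k l + - Z2 *\<^sub>v window du m k l)"
    unfolding W_def d_def by (rule hcat_one_uminus_mult_vec[OF Z1 Z2 dy window_carrier(2) window_carrier(2)])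
  ultimately have "ym k = Z *\<^sub>v v + W *\<^sub>v d"
    using pred Z1 Z2 dy by (intro eq_vecI) simp_all
  then have "L *\<^sub>v ym k = (L * Z) *\<^sub>v v + (L * W) *\<^sub>v d"
    unfolding L_def using Z W v d
    by (simp add: mult_add_distrib_mat_vec[OF L_mat_carrier(3)]
        assoc_mult_mat_vec[OF L_mat_carrier(3) Z v] assoc_mult_mat_vec[OF L_mat_carrier(3) W d])
  moreover have "(F + L * Z) *\<^sub>v v = F *\<^sub>v v + (L * Z) *\<^sub>v v"
    unfolding F_def L_def
    by (rule add_mult_distrib_mat_vec[OF blockdiag_shift_carrier mult_carrier_mat[OF L_mat_carrier(3) Z] v])
  ultimately have "(F + L * Z) *\<^sub>v v + Bl_mat p m l *\<^sub>v um k + (L * W) *\<^sub>v d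
                 = F *\<^sub>v v + L *\<^sub>v ym k + Bl_mat p m l *\<^sub>v um k"
    unfolding F_def L_def using Z W v d um by (intro eq_vecI) simp_all
  then show ?thesis
    unfolding F_def L_def v_def d_def Z_def W_def using stacked_window_Suc assms by simp
qed

section \<open>Input-output behaviour over a window\<close>

lemma reach_mat_dim [simp]:
  "dim_row (reach_mat A B l) = dim_row A" "dim_col (reach_mat A B l) = dim_col B * l"
  unfolding reach_mat_def by simp_all

lemma reach_mat_carrier:
  assumes "A \<in> carrier_mat n n" and "B \<in> carrier_mat n m"
  shows "reach_mat A B l \<in> carrier_mat n (m * l)"
  using assms by (intro carrier_matI) auto

lemma obsv_mat_carrier [simp]:
  "C \<in> carrier_mat p n \<Longrightarrow> A \<in> carrier_mat n n \<Longrightarrow> obsv_mat C A l \<in> carrier_mat (p * l) n"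
  unfolding obsv_mat_def carrier_mat_def by simp

lemma toeplitz_mat_carrier [simp]:
  "C \<in> carrier_mat p n \<Longrightarrow> B \<in> carrier_mat n m \<Longrightarrow> toeplitz_mat C A B l \<in> carrier_mat (p * l) (m * l)"
  unfolding toeplitz_mat_def carrier_mat_def by simp

lemma Z1_mat_carrier:
  assumes "C \<in> carrier_mat p n" "A \<in> carrier_mat n n" "OL \<in> carrier_mat n (p * l)"
  shows "Z1_mat C A OL l \<in> carrier_mat p (p * l)"
  unfolding Z1_mat_def
  by (rule mult_carrier_mat[OF mult_carrier_mat[OF assms(1) pow_carrier_mat[OF assms(2)]] assms(3)])

lemma Z2_mat_carrier:
  assumes C: "C \<in> carrier_mat p n" and A: "A \<in> carrier_mat n n" and B: "B \<in> carrier_mat n m"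
    and OL: "OL \<in> carrier_mat n (p * l)"
  shows "Z2_mat C A B OL l \<in> carrier_mat p (m * l)"
proof -
  have "C * A ^\<^sub>m l * OL * toeplitz_mat C A B l \<in> carrier_mat p (m * l)"
    using mult_carrier_mat[OF Z1_mat_carrier[OF C A OL] toeplitz_mat_carrier[OF C B]]
    unfolding Z1_mat_def .
  then show ?thesis unfolding Z2_mat_def by (rule minus_carrier_mat)
qed

lemma pow_mat_Suc_left: "A \<in> carrier_mat n n \<Longrightarrow> A ^\<^sub>m Suc k = A * A ^\<^sub>m k"
proof (induction k)
  case (Suc k)
  then have "A ^\<^sub>m Suc (Suc k) = (A * A ^\<^sub>m k) * A" by simp
  also have "\<dots> = A * (A ^\<^sub>m k * A)" using Suc.prems by (intro assoc_mult_mat) auto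
  finally show ?case by simp
qed simp

lemma col_reach_mat:
  assumes "A \<in> carrier_mat n n" and "B \<in> carrier_mat n m" and "j < m * l"
  shows "col (reach_mat A B l) j = col (A ^\<^sub>m (l - 1 - j div m) * B) (j mod m)"
proof -
  have "j mod m < m" using assms(3) by (cases m) auto
  moreover have "j < dim_col B * l" "dim_row B = n" "dim_col B = m" using assms by auto
  ultimately show ?thesis unfolding reach_mat_def using assms(1) by (intro eq_vecI) simp_all
qed

lemma reach_mat_Suc:
  assumes A: "A \<in> carrier_mat n n" and B: "B \<in> carrier_mat n m"
  shows "reach_mat A B (Suc l) = hcat (A * reach_mat A B l) B"
proof (rule mat_col_eqI)
  fix j assume "j < dim_col (hcat (A * reach_mat A B l) B)"
  then have j: "j < m * Suc l" using A B by simp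
  have reach_Suc: "col (reach_mat A B (Suc l)) j = col (A ^\<^sub>m (l - j div m) * B) (j mod m)"
    using col_reach_mat[OF A B j] by simp
  show "col (reach_mat A B (Suc l)) j = col (hcat (A * reach_mat A B l) B) j"
  proof (cases "j < m * l")
    case True
    then have jl: "j div m < l" by (rule block_div_less)
    have jm: "j mod m < m" using True by (cases m) auto
    have "col (hcat (A * reach_mat A B l) B) j = A *\<^sub>v col (reach_mat A B l) j"
      using True A B by (simp add: col_hcat col_mult2[OF A reach_mat_carrier[OF A B]])
    also have "\<dots> = A *\<^sub>v col (A ^\<^sub>m (l - 1 - j div m) * B) (j mod m)"
      using True A B by (simp add: col_reach_mat)
    also have "\<dots> = col (A * (A ^\<^sub>m (l - 1 - j div m) * B)) (j mod m)"
      using A B jm by (intro col_mult2[symmetric]) auto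
    also have "A * (A ^\<^sub>m (l - 1 - j div m) * B) = A * A ^\<^sub>m (l - 1 - j div m) * B"
      using A B by (intro assoc_mult_mat[symmetric]) auto
    also have "A * A ^\<^sub>m (l - 1 - j div m) = A ^\<^sub>m (l - j div m)"
      using jl pow_mat_Suc_left[OF A, of "l - 1 - j div m"] by (simp add: Suc_diff_Suc)
    finally show ?thesis by (simp only: reach_Suc)
  next
    case False
    then have jd: "j div m = l" and jm: "j mod m = j - m * l" using j block_div_mod[of m l j] by auto
    have "col (reach_mat A B (Suc l)) j = col (A ^\<^sub>m 0 * B) (j - m * l)"
      by (simp only: reach_Suc jd jm diff_self_eq_0)
    also have "A ^\<^sub>m 0 * B = B" using A B by simp
    finally have "col (reach_mat A B (Suc l)) j = col B (j - m * l)" .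
    moreover have "col (hcat (A * reach_mat A B l) B) j = col B (j - m * l)"
      using False j A B by (subst col_hcat) simp_all
    ultimately show ?thesis by simp
  qed
next
  show "dim_row (reach_mat A B (Suc l)) = dim_row (hcat (A * reach_mat A B l) B)" by simp
  show "dim_col (reach_mat A B (Suc l)) = dim_col (hcat (A * reach_mat A B l) B)" by simp
qed

lemma state_from_window:
  assumes A: "A \<in> carrier_mat n n" and B: "B \<in> carrier_mat n m"
    and x: "\<And>k. x k \<in> carrier_vec n" and u: "\<And>k. u k \<in> carrier_vec m"
    and sys: "\<And>k. k < T \<Longrightarrow> x (Suc k) = A *\<^sub>v x k + B *\<^sub>v u k"
  shows "l \<le> k \<Longrightarrow> k \<le> T \<Longrightarrow> x k = A ^\<^sub>m l *\<^sub>v x (k - l) + reach_mat A B l *\<^sub>v window u m k l"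
proof (induction l arbitrary: k)
  case 0
  have "reach_mat A B 0 *\<^sub>v window u m k 0 = 0\<^sub>v n"
    using A by (intro eq_vecI) (auto simp: scalar_prod_def)
  then show ?case using A x[of k] by simp
next
  case (Suc l)
  then obtain k' where k: "k = Suc k'" and lk': "l \<le> k'" by (cases k) auto
  let ?R = "reach_mat A B l" and ?w = "window u m k' l" and ?x0 = "x (k' - l)"
  have R: "?R \<in> carrier_mat n (m * l)" by (rule reach_mat_carrier[OF A B])
  have Ax: "A ^\<^sub>m l *\<^sub>v ?x0 \<in> carrier_vec n" by (rule mult_mat_vec_carrier[OF pow_carrier_mat[OF A] x])
  have Rw: "?R *\<^sub>v ?w \<in> carrier_vec n" by (rule mult_mat_vec_carrier[OF R window_carrier(2)])
  have Bu: "B *\<^sub>v u k' \<in> carrier_vec n" by (rule mult_mat_vec_carrier[OF B u])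
  have "x k = A *\<^sub>v (A ^\<^sub>m l *\<^sub>v ?x0 + ?R *\<^sub>v ?w) + B *\<^sub>v u k'"
    using sys[of k'] Suc k lk' by simp
  also have "\<dots> = A *\<^sub>v (A ^\<^sub>m l *\<^sub>v ?x0) + (A *\<^sub>v (?R *\<^sub>v ?w) + B *\<^sub>v u k')"
    unfolding mult_add_distrib_mat_vec[OF A Ax Rw]
    by (rule assoc_add_vec[OF mult_mat_vec_carrier[OF A Ax] mult_mat_vec_carrier[OF A Rw] Bu])
  also have "A *\<^sub>v (A ^\<^sub>m l *\<^sub>v ?x0) = A ^\<^sub>m Suc l *\<^sub>v ?x0"
    unfolding pow_mat_Suc_left[OF A] by (rule assoc_mult_mat_vec[symmetric, OF A pow_carrier_mat[OF A] x])
  also have "A *\<^sub>v (?R *\<^sub>v ?w) = (A * ?R) *\<^sub>v ?w"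
    by (rule assoc_mult_mat_vec[symmetric, OF A R window_carrier(2)])
  also have "(A * ?R) *\<^sub>v ?w + B *\<^sub>v u k' = reach_mat A B (Suc l) *\<^sub>v window u m k (Suc l)"
    unfolding reach_mat_Suc[OF A B] k window_snoc[OF lk' u]
    by (rule hcat_mult_vec[symmetric, OF mult_carrier_mat[OF A R] B window_carrier(2) u])
  finally show ?case using k by simp
qed


lemma row_obsv_mat:
  assumes C: "C \<in> carrier_mat p n" and A: "A \<in> carrier_mat n n" and i: "i < p * l"
  shows "row (obsv_mat C A l) i = row (C * A ^\<^sub>m (i div p)) (i mod p)"
proof -
  have "i mod p < p" using i by (cases p) auto
  then show ?thesis
    unfolding obsv_mat_def using i carrier_matD[OF C] carrier_matD[OF A] pow_mat_dim_square[OF A]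
    by (intro eq_vecI) simp_all
qed

lemma row_toeplitz_mat:
  assumes C: "C \<in> carrier_mat p n" and A: "A \<in> carrier_mat n n" and B: "B \<in> carrier_mat n m"
    and i: "i < p * l"
  shows "row (toeplitz_mat C A B l) i
       = row (C * reach_mat A B (i div p)) (i mod p) @\<^sub>v 0\<^sub>v (m * (l - i div p))"
    (is "_ = row (C * reach_mat A B ?b) ?r @\<^sub>v _")
proof (rule eq_vecI)
  have b: "?b < l" using i by (rule block_div_less)
  have r: "?r < p" using i by (cases p) auto
  note dims = carrier_matD[OF C] carrier_matD[OF A] carrier_matD[OF B]
    carrier_matD[OF toeplitz_mat_carrier[OF C B]]
  fix j assume "j < dim_vec (row (C * reach_mat A B ?b) ?r @\<^sub>v 0\<^sub>v (m * (l - ?b)))"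
  then have j: "j < m * l" using dims b by (simp add: diff_mult_distrib2)
  show "row (toeplitz_mat C A B l) i $ j = (row (C * reach_mat A B ?b) ?r @\<^sub>v 0\<^sub>v (m * (l - ?b))) $ j"
  proof (cases "j < m * ?b")
    case True
    have jd: "j div m < ?b" using True by (rule block_div_less)
    have jm: "j mod m < m" using True by (cases m) auto
    have "(C * reach_mat A B ?b) $$ (?r, j) = row C ?r \<bullet> col (reach_mat A B ?b) j"
      using r True dims by simp
    also have "\<dots> = row C ?r \<bullet> col (A ^\<^sub>m (?b - 1 - j div m) * B) (j mod m)"
      by (simp only: col_reach_mat[OF A B True])
    also have "\<dots> = (C * (A ^\<^sub>m (?b - 1 - j div m) * B)) $$ (?r, j mod m)"
      using r jm dims by simp
    also have "C * (A ^\<^sub>m (?b - 1 - j div m) * B) = C * A ^\<^sub>m (?b - j div m - 1) * B"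
      by (simp add: assoc_mult_mat[symmetric, OF C pow_carrier_mat[OF A] B])
    finally have "(C * reach_mat A B ?b) $$ (?r, j) = toeplitz_mat C A B l $$ (i, j)"
      unfolding toeplitz_mat_def using i j jd dims by simp
    then show ?thesis using True i j r dims by simp
  next
    case False
    moreover have "m > 0" using j by (cases m) auto
    ultimately have "?b \<le> j div m" using div_le_mono[of "m * ?b" j m] by simp
    moreover have "j - m * ?b < m * (l - ?b)" using j False by (simp add: diff_mult_distrib2)
    ultimately show ?thesis using False i j dims by (simp add: toeplitz_mat_def)
  qed
next
  have "m * (i div p) \<le> m * l" using block_div_less[OF i] by simp
  then show "dim_vec (row (toeplitz_mat C A B l) i)
           = dim_vec (row (C * reach_mat A B (i div p)) (i mod p) @\<^sub>v 0\<^sub>v (m * (l - i div p)))"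
    using carrier_matD[OF toeplitz_mat_carrier[OF C B]] carrier_matD[OF B]
    by (simp add: diff_mult_distrib2)
qed

lemma output_window_eq:
  assumes A: "A \<in> carrier_mat n n" and B: "B \<in> carrier_mat n m" and C: "C \<in> carrier_mat p n"
    and x: "\<And>k. x k \<in> carrier_vec n" and u: "\<And>k. u k \<in> carrier_vec m"
    and sys: "\<And>k. k < T \<Longrightarrow> x (Suc k) = A *\<^sub>v x k + B *\<^sub>v u k"
    and lk: "l \<le> k" and kT: "k \<le> T"
  shows "window (\<lambda>t. C *\<^sub>v x t) p k l
       = obsv_mat C A l *\<^sub>v x (k - l) + toeplitz_mat C A B l *\<^sub>v window u m k l"
proof (rule eq_vecI)
  fix i assume "i < dim_vec (obsv_mat C A l *\<^sub>v x (k - l) + toeplitz_mat C A B l *\<^sub>v window u m k l)"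
  then have i: "i < p * l" using carrier_matD[OF toeplitz_mat_carrier[OF C B]] by simp
  define b where "b = i div p"
  define r where "r = i mod p"
  have bl: "b < l" unfolding b_def using i by (rule block_div_less)
  have r: "r < p" unfolding r_def using i by (cases p) auto
  let ?x0 = "x (k - l)" and ?wb = "window u m (k - l + b) b" and ?w' = "window u m k (l - b)"
  have R: "reach_mat A B b \<in> carrier_mat n (m * b)" by (rule reach_mat_carrier[OF A B])
  have "x (k - l + b) = A ^\<^sub>m b *\<^sub>v ?x0 + reach_mat A B b *\<^sub>v ?wb"
    using state_from_window[where x = x and u = u and l = b and k = "k - l + b", OF A B x u sys] lk kT bl by simp
  then have "C *\<^sub>v x (k - l + b) = C *\<^sub>v (A ^\<^sub>m b *\<^sub>v ?x0) + C *\<^sub>v (reach_mat A B b *\<^sub>v ?wb)"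
    by (simp add: mult_add_distrib_mat_vec[OF C mult_mat_vec_carrier[OF pow_carrier_mat[OF A] x]
          mult_mat_vec_carrier[OF R window_carrier(2)]])
  also have "\<dots> = (C * A ^\<^sub>m b) *\<^sub>v ?x0 + (C * reach_mat A B b) *\<^sub>v ?wb"
    by (simp add: assoc_mult_mat_vec[OF C pow_carrier_mat[OF A] x] assoc_mult_mat_vec[OF C R window_carrier(2)])
  finally have Cx: "C *\<^sub>v x (k - l + b) = (C * A ^\<^sub>m b) *\<^sub>v ?x0 + (C * reach_mat A B b) *\<^sub>v ?wb" .
  have "window (\<lambda>t. C *\<^sub>v x t) p k l $ i = (C *\<^sub>v x (k - l + b)) $ r"
    using i unfolding window_def b_def r_def by simp
  also have "\<dots> = row (C * A ^\<^sub>m b) r \<bullet> ?x0 + row (C * reach_mat A B b) r \<bullet> ?wb"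
    unfolding Cx using r C A by simp
  also have "row (C * A ^\<^sub>m b) r \<bullet> ?x0 = (obsv_mat C A l *\<^sub>v ?x0) $ i"
    using i carrier_matD[OF obsv_mat_carrier[OF C A]] unfolding b_def r_def
    by (simp add: row_obsv_mat[OF C A i])
  also have "row (C * reach_mat A B b) r \<bullet> ?wb = (toeplitz_mat C A B l *\<^sub>v window u m k l) $ i"
  proof -
    have "(toeplitz_mat C A B l *\<^sub>v window u m k l) $ i
        = (row (C * reach_mat A B b) r @\<^sub>v 0\<^sub>v (m * (l - b))) \<bullet> (?wb @\<^sub>v ?w')"
      using i carrier_matD[OF toeplitz_mat_carrier[OF C B]] unfolding b_def r_def
      by (simp add: row_toeplitz_mat[OF C A B i] window_split[OF less_imp_le[OF block_div_less[OF i]] lk])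
    also have "\<dots> = row (C * reach_mat A B b) r \<bullet> ?wb + 0\<^sub>v (m * (l - b)) \<bullet> ?w'"
      using row_carrier[of "C * reach_mat A B b" r] carrier_matD(2)[OF B]
      by (intro scalar_prod_append[OF _ zero_carrier_vec window_carrier(2) window_carrier(2)]) simp
    finally show ?thesis by simp
  qed
  finally show "window (\<lambda>t. C *\<^sub>v x t) p k l $ i
              = (obsv_mat C A l *\<^sub>v x (k - l) + toeplitz_mat C A B l *\<^sub>v window u m k l) $ i"
    using i carrier_matD[OF toeplitz_mat_carrier[OF C B]] by simp
qed (use carrier_matD[OF toeplitz_mat_carrier[OF C B]] in simp)

lemma state_from_data:
  assumes A: "A \<in> carrier_mat n n" and B: "B \<in> carrier_mat n m" and C: "C \<in> carrier_mat p n"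
    and OL: "OL \<in> carrier_mat n (p * l)" and OL_left: "OL * obsv_mat C A l = 1\<^sub>m n"
    and x: "\<And>k. x k \<in> carrier_vec n" and u: "\<And>k. u k \<in> carrier_vec m"
    and sys: "\<And>k. k < T \<Longrightarrow> x (Suc k) = A *\<^sub>v x k + B *\<^sub>v u k"
    and lk: "l \<le> k" and kT: "k \<le> T"
  shows "x (k - l) = OL *\<^sub>v (window (\<lambda>t. C *\<^sub>v x t) p k l - toeplitz_mat C A B l *\<^sub>v window u m k l)"
proof -
  let ?y = "window (\<lambda>t. C *\<^sub>v x t) p k l" and ?w = "window u m k l" and ?x0 = "x (k - l)"
  let ?O = "obsv_mat C A l" and ?T = "toeplitz_mat C A B l"
  have O: "?O \<in> carrier_mat (p * l) n" by (rule obsv_mat_carrier[OF C A])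
  have y: "?y = ?O *\<^sub>v ?x0 + ?T *\<^sub>v ?w"
    by (rule output_window_eq[where x = x and u = u, OF A B C x u sys lk kT])
  have "?y - ?T *\<^sub>v ?w = ?O *\<^sub>v ?x0"
    using carrier_matD[OF O] carrier_matD[OF toeplitz_mat_carrier[OF C B]]
    by (subst y, intro eq_vecI) simp_all
  then have "OL *\<^sub>v (?y - ?T *\<^sub>v ?w) = (OL * ?O) *\<^sub>v ?x0"
    by (simp add: assoc_mult_mat_vec[OF OL O x])
  then show ?thesis using OL_left x by simp
qed

lemma output_predictor:
  assumes A: "A \<in> carrier_mat n n" and B: "B \<in> carrier_mat n m" and C: "C \<in> carrier_mat p n"
    and OL: "OL \<in> carrier_mat n (p * l)" and OL_left: "OL * obsv_mat C A l = 1\<^sub>m n"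
    and x: "\<And>k. x k \<in> carrier_vec n" and u: "\<And>k. u k \<in> carrier_vec m"
    and sys: "\<And>k. k < T \<Longrightarrow> x (Suc k) = A *\<^sub>v x k + B *\<^sub>v u k"
    and lk: "l \<le> k" and kT: "k \<le> T"
  shows "C *\<^sub>v x k = Z1_mat C A OL l *\<^sub>v window (\<lambda>t. C *\<^sub>v x t) p k l
                    + Z2_mat C A B OL l *\<^sub>v window u m k l"
proof -
  let ?y = "window (\<lambda>t. C *\<^sub>v x t) p k l" and ?w = "window u m k l" and ?x0 = "x (k - l)"
  let ?T = "toeplitz_mat C A B l" and ?R = "reach_mat A B l" and ?Z1 = "Z1_mat C A OL l"
  have T: "?T \<in> carrier_mat (p * l) (m * l)" by (rule toeplitz_mat_carrier[OF C B])
  have R: "?R \<in> carrier_mat n (m * l)" by (rule reach_mat_carrier[OF A B])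
  have Z1: "?Z1 \<in> carrier_mat p (p * l)" by (rule Z1_mat_carrier[OF C A OL])
  have Tw: "?T *\<^sub>v ?w \<in> carrier_vec (p * l)" by (rule mult_mat_vec_carrier[OF T window_carrier(2)])
  have x0: "?x0 = OL *\<^sub>v (?y - ?T *\<^sub>v ?w)"
    by (rule state_from_data[where x = x and u = u, OF A B C OL OL_left x u sys lk kT])
  have "C *\<^sub>v x k = C *\<^sub>v (A ^\<^sub>m l *\<^sub>v ?x0 + ?R *\<^sub>v ?w)"
    by (rule arg_cong[OF state_from_window[where x = x and u = u, OF A B x u sys lk kT]])
  also have "\<dots> = C *\<^sub>v (A ^\<^sub>m l *\<^sub>v ?x0) + C *\<^sub>v (?R *\<^sub>v ?w)"
    by (rule mult_add_distrib_mat_vec[OF C mult_mat_vec_carrier[OF pow_carrier_mat[OF A] x]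
          mult_mat_vec_carrier[OF R window_carrier(2)]])
  also have "C *\<^sub>v (A ^\<^sub>m l *\<^sub>v ?x0) = ?Z1 *\<^sub>v ?y - ?Z1 *\<^sub>v (?T *\<^sub>v ?w)"
  proof -
    have "C *\<^sub>v (A ^\<^sub>m l *\<^sub>v ?x0) = (C * A ^\<^sub>m l) *\<^sub>v (OL *\<^sub>v (?y - ?T *\<^sub>v ?w))"
      unfolding x0[symmetric]
      by (rule assoc_mult_mat_vec[symmetric, OF C pow_carrier_mat[OF A] x])
    also have "\<dots> = ?Z1 *\<^sub>v (?y - ?T *\<^sub>v ?w)"
      unfolding Z1_mat_def
      by (rule assoc_mult_mat_vec[symmetric, OF mult_carrier_mat[OF C pow_carrier_mat[OF A]] OL
            minus_carrier_vec[OF window_carrier(2) Tw]])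
    finally show ?thesis
      using mult_minus_distrib_mat_vec[OF Z1 window_carrier(2) Tw] by simp
  qed
  also have "C *\<^sub>v (?R *\<^sub>v ?w) = Z2_mat C A B OL l *\<^sub>v ?w + ?Z1 *\<^sub>v (?T *\<^sub>v ?w)"
  proof -
    have "Z2_mat C A B OL l *\<^sub>v ?w = (C * ?R) *\<^sub>v ?w - (?Z1 * ?T) *\<^sub>v ?w"
      unfolding Z2_mat_def Z1_mat_def[symmetric]
      by (rule minus_mult_distrib_mat_vec[OF mult_carrier_mat[OF C R] mult_carrier_mat[OF Z1 T]
            window_carrier(2)])
    then show ?thesis
      using assoc_mult_mat_vec[OF C R window_carrier(2)] assoc_mult_mat_vec[OF Z1 T window_carrier(2)]
        carrier_matD[OF Z1] carrier_matD[OF C] by (intro eq_vecI) simp_all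
  qed
  finally show ?thesis
    using carrier_matD[OF Z1] carrier_matD[OF Z2_mat_carrier[OF C A B OL]] by (intro eq_vecI) simp_all
qed


lemma noisy_output_predictor:
  assumes A: "A \<in> carrier_mat n n" and B: "B \<in> carrier_mat n m" and C: "C \<in> carrier_mat p n"
    and OL: "OL \<in> carrier_mat n (p * l)" and OL_left: "OL * obsv_mat C A l = 1\<^sub>m n"
    and x: "\<And>k. x k \<in> carrier_vec n" and u: "\<And>k. u k \<in> carrier_vec m"
    and du: "\<And>k. du k \<in> carrier_vec m" and dy: "\<And>k. dy k \<in> carrier_vec p"
    and sys: "\<And>k. k < T \<Longrightarrow> x (Suc k) = A *\<^sub>v x k + B *\<^sub>v u k"
    and meas_y: "\<And>k. k \<le> T \<Longrightarrow> ym k = C *\<^sub>v x k + dy k"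
    and meas_u: "\<And>k. k \<le> T \<Longrightarrow> um k = u k + du k"
    and lk: "l \<le> k" and kT: "k \<le> T"
  shows "ym k = Z1_mat C A OL l *\<^sub>v window ym p k l + Z2_mat C A B OL l *\<^sub>v window um m k l
              - Z1_mat C A OL l *\<^sub>v window dy p k l - Z2_mat C A B OL l *\<^sub>v window du m k l + dy k"
proof -
  let ?Z1 = "Z1_mat C A OL l" and ?Z2 = "Z2_mat C A B OL l"
  let ?y = "window (\<lambda>t. C *\<^sub>v x t) p k l" and ?w = "window u m k l"
  have Z1: "?Z1 \<in> carrier_mat p (p * l)" by (rule Z1_mat_carrier[OF C A OL])
  have Z2: "?Z2 \<in> carrier_mat p (m * l)" by (rule Z2_mat_carrier[OF C A B OL])
  have Cx: "\<And>t. C *\<^sub>v x t \<in> carrier_vec p" by (rule mult_mat_vec_carrier[OF C x])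
  have "window ym p k l = window (\<lambda>t. C *\<^sub>v x t + dy t) p k l"
    using meas_y kT by (intro window_cong[OF lk]) simp
  also have "\<dots> = ?y + window dy p k l" by (rule window_add[OF Cx dy])
  finally have "?Z1 *\<^sub>v window ym p k l = ?Z1 *\<^sub>v ?y + ?Z1 *\<^sub>v window dy p k l"
    by (simp add: mult_add_distrib_mat_vec[OF Z1 window_carrier(2) window_carrier(2)])
  moreover have "window um m k l = window (\<lambda>t. u t + du t) m k l"
    using meas_u kT by (intro window_cong[OF lk]) simp
  then have "window um m k l = ?w + window du m k l" by (simp add: window_add[OF u du])
  then have "?Z2 *\<^sub>v window um m k l = ?Z2 *\<^sub>v ?w + ?Z2 *\<^sub>v window du m k l"
    by (simp add: mult_add_distrib_mat_vec[OF Z2 window_carrier(2) window_carrier(2)])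
  moreover have "ym k = ?Z1 *\<^sub>v ?y + ?Z2 *\<^sub>v ?w + dy k"
    using meas_y[OF kT] output_predictor[where x = x and u = u, OF A B C OL OL_left x u sys lk kT] by simp
  ultimately show ?thesis
    using carrier_matD[OF Z1] carrier_matD[OF Z2] dy[of k] by (intro eq_vecI) simp_all
qed

lemma noisy_companion_step:
  assumes A: "A \<in> carrier_mat n n" and B: "B \<in> carrier_mat n m" and C: "C \<in> carrier_mat p n"
    and OL: "OL \<in> carrier_mat n (p * l)" and OL_left: "OL * obsv_mat C A l = 1\<^sub>m n"
    and x: "\<And>k. x k \<in> carrier_vec n" and u: "\<And>k. u k \<in> carrier_vec m"
    and du: "\<And>k. du k \<in> carrier_vec m" and dy: "\<And>k. dy k \<in> carrier_vec p"
    and sys: "\<And>k. k < T \<Longrightarrow> x (Suc k) = A *\<^sub>v x k + B *\<^sub>v u k"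
    and meas_y: "\<And>k. k \<le> T \<Longrightarrow> ym k = C *\<^sub>v x k + dy k"
    and meas_u: "\<And>k. k \<le> T \<Longrightarrow> um k = u k + du k"
    and lk: "l \<le> k" and kT: "k \<le> T"
  shows "window ym p (Suc k) l @\<^sub>v window um m (Suc k) l
       = (blockdiag (shift_mat p l) (shift_mat m l) + L_mat p m l * hcat (Z1_mat C A OL l) (Z2_mat C A B OL l))
           *\<^sub>v (window ym p k l @\<^sub>v window um m k l)
         + Bl_mat p m l *\<^sub>v um k
         + (L_mat p m l * hcat (hcat (1\<^sub>m p) (- Z1_mat C A OL l)) (- Z2_mat C A B OL l))
           *\<^sub>v (dy k @\<^sub>v window dy p k l @\<^sub>v window du m k l)"
proof (rule window_companion_step[OF Z1_mat_carrier[OF C A OL] Z2_mat_carrier[OF C A B OL] lk _ _ dy])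
  show "ym k \<in> carrier_vec p" using meas_y[OF kT] mult_mat_vec_carrier[OF C x] dy by simp
  show "um k \<in> carrier_vec m" using meas_u[OF kT] u du by simp
qed (rule noisy_output_predictor[where x = x and u = u, OF assms])

section \<open>Hankel matrices of the data\<close>

lemma hankel_dim [simp]: "dim_row (hankel f q s l N) = q * l" "dim_col (hankel f q s l N) = N"
  unfolding hankel_def by simp_all

lemma col_hankel: "j < N \<Longrightarrow> col (hankel f q s l N) j = window f q (s + j + l) l"
  unfolding hankel_def window_def by (intro eq_vecI) simp_all

lemma hankel_recursion:
  fixes X Y W :: "real mat"
  assumes X: "X \<in> carrier_mat ((p + m) * l) ((p + m) * l)" and Y: "Y \<in> carrier_mat ((p + m) * l) m"
    and W: "W \<in> carrier_mat ((p + m) * l) (p + (p + m) * l)"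
    and N: "l + N \<le> Suc T"
    and um: "\<And>k. k \<le> T \<Longrightarrow> um k \<in> carrier_vec m" and dy: "\<And>k. dy k \<in> carrier_vec p"
    and step: "\<And>k. l \<le> k \<Longrightarrow> k \<le> T \<Longrightarrow>
      window ym p (Suc k) l @\<^sub>v window um m (Suc k) l
      = X *\<^sub>v (window ym p k l @\<^sub>v window um m k l) + Y *\<^sub>v um k
        + W *\<^sub>v (dy k @\<^sub>v window dy p k l @\<^sub>v window du m k l)"
  shows "vcat (hankel ym p 1 l N) (hankel um m 1 l N)
       = X * vcat (hankel ym p 0 l N) (hankel um m 0 l N) + Y * hankel um m l 1 N
         + W * vcat (hankel dy p l 1 N) (vcat (hankel dy p 0 l N) (hankel du m 0 l N))"
proof (rule mat_eq_mult_add_by_col[OF X _ Y _ W])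
  have pml: "(p + m) * l = p * l + m * l" by (rule distrib_right)
  show "vcat (hankel ym p 0 l N) (hankel um m 0 l N) \<in> carrier_mat ((p + m) * l) N"
    "vcat (hankel ym p 1 l N) (hankel um m 1 l N) \<in> carrier_mat ((p + m) * l) N"
    "vcat (hankel dy p l 1 N) (vcat (hankel dy p 0 l N) (hankel du m 0 l N)) \<in> carrier_mat (p + (p + m) * l) N"
    unfolding pml by auto
  show "hankel um m l 1 N \<in> carrier_mat m N" by auto
  fix j assume j: "j < N"
  then have k: "l \<le> l + j" "l + j \<le> T" using N by auto
  show "col (vcat (hankel ym p 1 l N) (hankel um m 1 l N)) j
      = X *\<^sub>v col (vcat (hankel ym p 0 l N) (hankel um m 0 l N)) j + Y *\<^sub>v col (hankel um m l 1 N) j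
        + W *\<^sub>v col (vcat (hankel dy p l 1 N) (vcat (hankel dy p 0 l N) (hankel du m 0 l N))) j"
    using step[OF k] j um[OF k(2)] dy by (simp add: col_vcat col_hankel window_one[simplified] add.commute)
qed

theorem lemma4:
  fixes A B C OL :: "real mat" and n m p l T :: nat
    and x u du dy um ym :: "nat \<Rightarrow> real vec"
  assumes A: "A \<in> carrier_mat n n" and B: "B \<in> carrier_mat n m" and C: "C \<in> carrier_mat p n"
    and obs: "observable C A" and l_def: "l = obs_index C A"
    and OL: "OL \<in> carrier_mat n (p * l)" and OL_left: "OL * obsv_mat C A l = 1\<^sub>m n"
    and lT: "l \<le> T"
    and dims: "\<And>k. x k \<in> carrier_vec n \<and> u k \<in> carrier_vec m
                   \<and> du k \<in> carrier_vec m \<and> dy k \<in> carrier_vec p"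
    and sys: "\<And>k. k < T \<Longrightarrow> x (Suc k) = A *\<^sub>v x k + B *\<^sub>v u k"
    and meas_y: "\<And>k. k \<le> T \<Longrightarrow> ym k = C *\<^sub>v x k + dy k"
    and meas_u: "\<And>k. k \<le> T \<Longrightarrow> um k = u k + du k"
  defines "F \<equiv> blockdiag (shift_mat p l) (shift_mat m l)"
    and "Lm \<equiv> L_mat p m l"
    and "Bm \<equiv> Bl_mat p m l"
    and "AA \<equiv> blockdiag (shift_mat p l) (shift_mat m l) + L_mat p m l * Z_mat C A B OL l"
    and "Bd \<equiv> L_mat p m l * hcat (hcat (1\<^sub>m p) (- Z1_mat C A OL l)) (- Z2_mat C A B OL l)"
    and "Psi1 \<equiv> vcat (hankel ym p 1 l (T - l + 1)) (hankel um m 1 l (T - l + 1))"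
    and "Psi0 \<equiv> vcat (hankel ym p 0 l (T - l + 1)) (hankel um m 0 l (T - l + 1))"
    and "U1 \<equiv> hankel um m l 1 (T - l + 1)"
    and "Delta10 \<equiv> vcat (hankel dy p l 1 (T - l + 1)) (vcat (hankel dy p 0 l (T - l + 1)) (hankel du m 0 l (T - l + 1)))"
  shows "let Z1 = Z1_mat C A OL l; Z2 = Z2_mat C A B OL l; Z = Z_mat C A B OL l in (\<forall>k \<in> {l..T}.
            ym k = Z1 *\<^sub>v window ym p k l + Z2 *\<^sub>v window um m k l
                   - Z1 *\<^sub>v window dy p k l - Z2 *\<^sub>v window du m k l + dy k)
       \<and> (\<forall>k \<in> {l..T}.
            window ym p (Suc k) l @\<^sub>v window um m (Suc k) l
            = (F + Lm * hcat Z1 Z2) *\<^sub>v (window ym p k l @\<^sub>v window um m k l)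
              + Bm *\<^sub>v um k
              + (Lm * hcat (hcat (1\<^sub>m p) (- Z1)) (- Z2))
                  *\<^sub>v (dy k @\<^sub>v window dy p k l @\<^sub>v window du m k l))
       \<and> Psi1 = (F + Lm * Z) * Psi0 + Bm * U1 + Lm * hcat (1\<^sub>m p) (- Z) * Delta10
       \<and> (F + Lm * Z) * Psi0 + Bm * U1 + Lm * hcat (1\<^sub>m p) (- Z) * Delta10
           = AA * Psi0 + Bm * U1 + Bd * Delta10"
proof -
  \<comment> \<open>Observability and the choice of l only guarantee that OL exists; the argument uses
    nothing about OL beyond OL * O_l = I.\<close>
  have x: "\<And>k. x k \<in> carrier_vec n" and u: "\<And>k. u k \<in> carrier_vec m"
    and du: "\<And>k. du k \<in> carrier_vec m" and dy: "\<And>k. dy k \<in> carrier_vec p"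
    using dims by auto
  note predictor = noisy_output_predictor[where x = x and u = u and T = T, OF A B C OL OL_left x u du dy sys meas_y meas_u]
  note companion = noisy_companion_step[where x = x and u = u and T = T, OF A B C OL OL_left x u du dy sys meas_y meas_u]
  let ?Z1 = "Z1_mat C A OL l" and ?Z2 = "Z2_mat C A B OL l"
  have Z1: "?Z1 \<in> carrier_mat p (p * l)" and Z2: "?Z2 \<in> carrier_mat p (m * l)"
    by (rule Z1_mat_carrier[OF C A OL], rule Z2_mat_carrier[OF C A B OL])
  have Z: "hcat ?Z1 ?Z2 \<in> carrier_mat p ((p + m) * l)"
    unfolding distrib_right using Z1 Z2 by simp
  have W: "hcat (1\<^sub>m p) (- hcat ?Z1 ?Z2) = hcat (hcat (1\<^sub>m p) (- ?Z1)) (- ?Z2)"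
    unfolding uminus_hcat[OF Z1 Z2]
    by (rule hcat_assoc[OF one_carrier_mat uminus_carrier_mat[OF Z1] uminus_carrier_mat[OF Z2]])
  have um: "um k \<in> carrier_vec m" if "k \<le> T" for k using meas_u[OF that] u du by simp
  have "Psi1 = (F + Lm * hcat ?Z1 ?Z2) * Psi0 + Bm * U1 + Lm * hcat (1\<^sub>m p) (- hcat ?Z1 ?Z2) * Delta10"
    unfolding Psi1_def Psi0_def U1_def Delta10_def F_def Lm_def Bm_def
    by (rule hankel_recursion[OF add_carrier_mat[OF mult_carrier_mat[OF L_mat_carrier(3) Z]]
          Bl_mat_carrier(3) mult_carrier_mat[OF L_mat_carrier(3) hcat_carrier_mat[OF one_carrier_mat
          uminus_carrier_mat[OF Z]]] _ um dy])
      (use lT companion W Z in auto)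
  then show ?thesis
    unfolding Let_def AA_def Bd_def F_def Lm_def Bm_def Z_mat_def W
    using predictor companion lT by auto
qed

end
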